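(* Let $X$ be a T$_D$ space. Then the McKinsey scheme $\mathrm{M}:\ \Box\Diamond\varphi\to\Diamond\Box\varphi$ is $d$-valid in $X$ if and only if $X$ is crowded and openly irresolvable. Consequently, if $X$ is T$_D$ and crowded, then the following are equivalent: $\mathrm{M}$ is $d$-valid in $X$; $X$ is openly irresolvable; $\mathrm{M}$ is $C$-valid in $X$.
   Context: Topological models on a space $X$ are valuations of propositional variables by subsets of $X$, with Boolean connectives interpreted as set operations and $\Box=\neg\Diamond\neg$. In $d$-semantics, $\Diamond\varphi$ is interpreted as the derived set $\mathrm{d}_X$ (set of limit points: $x$ such that every $O-\{x\}$, $O$ an open neighbourhood of $x$, meets the set) of the truth set of $\varphi$; in $C$-semantics, $\Diamond\varphi$ is interpreted as the closure of the truth set of $\varphi$ (so $\Box$ is interior). A scheme is $d$-valid (resp. $C$-valid) in $X$ if all its instances are true at all points of all models on $X$ under $d$-semantics (resp. $C$-semantics). $X$ is T$_D$ if $\mathrm{d}_X\{x\}$ is closed for all $x$; crowded if it has no isolated points. A space is irresolvable if it has no two disjoint non-empty dense subsets; $X$ is openly irresolvable if every non-empty open subspace is irresolvable. *)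

theory Defs
  imports "HOL-Analysis.Analysis"
begin

datatype fm = Var nat | Bot | Neg fm | Conj fm fm | Disj fm fm | Imp fm fm | Dia fm

definition Box :: "fm \<Rightarrow> fm" where "Box \<phi> = Neg (Dia (Neg \<phi>))"

definition McKinsey :: "fm \<Rightarrow> fm" where
  "McKinsey \<phi> = Imp (Box (Dia \<phi>)) (Dia (Box \<phi>))"

text \<open>Truth sets; the parameter D interprets the diamond (derived set or closure).\<close>
fun tsem :: "'a set \<Rightarrow> ('a set \<Rightarrow> 'a set) \<Rightarrow> (nat \<Rightarrow> 'a set) \<Rightarrow> fm \<Rightarrow> 'a set" where
  "tsem S D V (Var p) = V p"
| "tsem S D V Bot = {}"
| "tsem S D V (Neg \<phi>) = S - tsem S D V \<phi>"
| "tsem S D V (Conj \<phi> \<psi>) = tsem S D V \<phi> \<inter> tsem S D V \<psi>"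
| "tsem S D V (Disj \<phi> \<psi>) = tsem S D V \<phi> \<union> tsem S D V \<psi>"
| "tsem S D V (Imp \<phi> \<psi>) = (S - tsem S D V \<phi>) \<union> tsem S D V \<psi>"
| "tsem S D V (Dia \<phi>) = D (tsem S D V \<phi>)"

definition d_sem :: "'a topology \<Rightarrow> (nat \<Rightarrow> 'a set) \<Rightarrow> fm \<Rightarrow> 'a set" where
  "d_sem X V \<phi> = tsem (topspace X) (\<lambda>A. X derived_set_of A) V \<phi>"

definition C_sem :: "'a topology \<Rightarrow> (nat \<Rightarrow> 'a set) \<Rightarrow> fm \<Rightarrow> 'a set" where
  "C_sem X V \<phi> = tsem (topspace X) (\<lambda>A. X closure_of A) V \<phi>"

definition valuation :: "'a topology \<Rightarrow> (nat \<Rightarrow> 'a set) \<Rightarrow> bool" where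
  "valuation X V \<longleftrightarrow> (\<forall>p. V p \<subseteq> topspace X)"

definition M_d_valid :: "'a topology \<Rightarrow> bool" where
  "M_d_valid X \<longleftrightarrow> (\<forall>V \<phi>. valuation X V \<longrightarrow> d_sem X V (McKinsey \<phi>) = topspace X)"

definition M_C_valid :: "'a topology \<Rightarrow> bool" where
  "M_C_valid X \<longleftrightarrow> (\<forall>V \<phi>. valuation X V \<longrightarrow> C_sem X V (McKinsey \<phi>) = topspace X)"

definition T_D :: "'a topology \<Rightarrow> bool" where
  "T_D X \<longleftrightarrow> (\<forall>x \<in> topspace X. closedin X (X derived_set_of {x}))"

definition crowded :: "'a topology \<Rightarrow> bool" where
  "crowded X \<longleftrightarrow> (\<forall>x \<in> topspace X. \<not> openin X {x})"

definition irresolvable :: "'a topology \<Rightarrow> bool" where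
  "irresolvable X \<longleftrightarrow> \<not> (\<exists>A B. A \<subseteq> topspace X \<and> B \<subseteq> topspace X \<and> A \<inter> B = {} \<and>
      A \<noteq> {} \<and> B \<noteq> {} \<and> X closure_of A = topspace X \<and> X closure_of B = topspace X)"

definition openly_irresolvable :: "'a topology \<Rightarrow> bool" where
  "openly_irresolvable X \<longleftrightarrow>
     (\<forall>U. openin X U \<and> U \<noteq> {} \<longrightarrow> irresolvable (subtopology X U))"

end

theory Submission
  imports Defs
begin

(* Under C-semantics the McKinsey scheme says int cl A \<subseteq> cl int A.  This is open
   irresolvability in disguise: if A is dense in a non-empty open U, then U - A is
   dense in U as well unless A has interior meeting every open subset of U.
   In a crowded T_D space every neighbourhood U of x contains the non-empty open
   set U - cl {x}, which misses x.  Hence an open subset of cl A lies in the derived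
   set of A, and the d-box of A, the co-derived set X - d (X - A), lies in d (int A);
   these two facts reduce the d-valid McKinsey scheme to the C-valid one.
   An isolated point refutes the d-instance of the scheme at phi = Bot. *)

lemma tsem_subset:
  assumes "\<And>p. V p \<subseteq> S" and "\<And>A. D A \<subseteq> S"
  shows "tsem S D V \<phi> \<subseteq> S"
  by (induction \<phi>) (use assms in auto)

lemma tsem_McKinsey:
  "tsem S D V (McKinsey \<phi>) = (S - (S - D (S - D (tsem S D V \<phi>)))) \<union> D (S - D (S - tsem S D V \<phi>))"
  by (simp add: McKinsey_def Box_def)

lemma tsem_McKinsey_valid_iff:
  assumes D: "\<And>A. D A \<subseteq> S"
  shows "(\<forall>V \<phi>. (\<forall>p. V p \<subseteq> S) \<longrightarrow> tsem S D V (McKinsey \<phi>) = S) \<longleftrightarrow>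
         (\<forall>A \<subseteq> S. S - D (S - D A) \<subseteq> D (S - D (S - A)))"
proof (intro iffI allI impI)
  fix A assume valid: "\<forall>V \<phi>. (\<forall>p. V p \<subseteq> S) \<longrightarrow> tsem S D V (McKinsey \<phi>) = S"
    and "A \<subseteq> S"
  then have "tsem S D (\<lambda>_. A) (McKinsey (Var 0)) = S"
    by simp
  then show "S - D (S - D A) \<subseteq> D (S - D (S - A))"
    unfolding tsem_McKinsey by auto
next
  fix V :: "nat \<Rightarrow> 'a set" and \<phi>
  assume valid: "\<forall>A \<subseteq> S. S - D (S - D A) \<subseteq> D (S - D (S - A))"
    and V: "\<forall>p. V p \<subseteq> S"
  have "tsem S D V \<phi> \<subseteq> S"
    by (rule tsem_subset[OF _ D]) (use V in blast)
  then have "S - D (S - D (tsem S D V \<phi>)) \<subseteq> D (S - D (S - tsem S D V \<phi>))"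
    using valid by simp
  moreover have "D (S - D (S - tsem S D V \<phi>)) \<subseteq> S"
    by (rule D)
  ultimately show "tsem S D V (McKinsey \<phi>) = S"
    unfolding tsem_McKinsey by blast
qed

lemma M_C_valid_iff:
  "M_C_valid X \<longleftrightarrow> (\<forall>A \<subseteq> topspace X.
     X interior_of (X closure_of A) \<subseteq> X closure_of (X interior_of A))"
  unfolding M_C_valid_def valuation_def C_sem_def interior_of_closure_of
  by (rule tsem_McKinsey_valid_iff[OF closure_of_subset_topspace])

definition coderived_set_of :: "'a topology \<Rightarrow> 'a set \<Rightarrow> 'a set"
    (infixr \<open>coderived'_set'_of\<close> 80)
  where "X coderived_set_of A = topspace X - X derived_set_of (topspace X - A)"

lemma in_coderived_set_of:
  "x \<in> X coderived_set_of A \<longleftrightarrow> (\<exists>U. openin X U \<and> x \<in> U \<and> U - {x} \<subseteq> A)"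
proof
  assume "x \<in> X coderived_set_of A"
  then obtain U where "openin X U" "x \<in> U" "\<forall>y. y \<noteq> x \<and> y \<in> U \<longrightarrow> y \<notin> topspace X - A"
    by (auto simp: coderived_set_of_def in_derived_set_of)
  then show "\<exists>U. openin X U \<and> x \<in> U \<and> U - {x} \<subseteq> A"
    using openin_subset by blast
next
  assume "\<exists>U. openin X U \<and> x \<in> U \<and> U - {x} \<subseteq> A"
  then show "x \<in> X coderived_set_of A"
    using openin_subset by (auto simp: coderived_set_of_def in_derived_set_of)
qed

lemma interior_of_subset_coderived_set_of: "X interior_of A \<subseteq> X coderived_set_of A"
proof
  fix x assume "x \<in> X interior_of A"
  then show "x \<in> X coderived_set_of A"
    unfolding in_coderived_set_of using interior_of_subset[of X A]
    by (intro exI[of _ "X interior_of A"]) auto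
qed

lemma M_d_valid_iff:
  "M_d_valid X \<longleftrightarrow> (\<forall>A \<subseteq> topspace X.
     X coderived_set_of (X derived_set_of A) \<subseteq> X derived_set_of (X coderived_set_of A))"
  unfolding M_d_valid_def valuation_def d_sem_def coderived_set_of_def
  by (rule tsem_McKinsey_valid_iff[OF derived_set_of_subset_topspace])

lemma irresolvable_open_subtopology_iff:
  assumes U: "openin X U" and "U \<noteq> {}"
  shows "irresolvable (subtopology X U) \<longleftrightarrow>
         (\<forall>A \<subseteq> U. U \<subseteq> X closure_of A \<longrightarrow> \<not> U \<subseteq> X closure_of (U - A))"
proof -
  have top: "topspace (subtopology X U) = U"
    using topspace_subtopology_subset[OF openin_subset[OF U]] .
  have dense: "subtopology X U closure_of A = U \<longleftrightarrow> U \<subseteq> X closure_of A" for A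
    by (auto simp: closure_of_subtopology_open[OF disjI1[OF U]])
  have nonempty: "A \<noteq> {}" if "U \<subseteq> X closure_of A" for A
    using that \<open>U \<noteq> {}\<close> by auto
  have resolvable_iff: "(\<exists>A B. A \<subseteq> U \<and> B \<subseteq> U \<and> A \<inter> B = {} \<and> A \<noteq> {} \<and> B \<noteq> {} \<and>
           U \<subseteq> X closure_of A \<and> U \<subseteq> X closure_of B) \<longleftrightarrow>
        (\<exists>A \<subseteq> U. U \<subseteq> X closure_of A \<and> U \<subseteq> X closure_of (U - A))"
  proof
    assume "\<exists>A B. A \<subseteq> U \<and> B \<subseteq> U \<and> A \<inter> B = {} \<and> A \<noteq> {} \<and> B \<noteq> {} \<and>
              U \<subseteq> X closure_of A \<and> U \<subseteq> X closure_of B"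
    then obtain A B where A: "A \<subseteq> U" "U \<subseteq> X closure_of A"
      and B: "B \<subseteq> U" "A \<inter> B = {}" "U \<subseteq> X closure_of B"
      by auto
    have "X closure_of B \<subseteq> X closure_of (U - A)"
      using B by (intro closure_of_mono) auto
    with A B(3) show "\<exists>A \<subseteq> U. U \<subseteq> X closure_of A \<and> U \<subseteq> X closure_of (U - A)"
      by (intro exI[of _ A]) auto
  next
    assume "\<exists>A \<subseteq> U. U \<subseteq> X closure_of A \<and> U \<subseteq> X closure_of (U - A)"
    then obtain A where "A \<subseteq> U" "U \<subseteq> X closure_of A" "U \<subseteq> X closure_of (U - A)"
      by auto
    then show "\<exists>A B. A \<subseteq> U \<and> B \<subseteq> U \<and> A \<inter> B = {} \<and> A \<noteq> {} \<and> B \<noteq> {} \<and>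
                 U \<subseteq> X closure_of A \<and> U \<subseteq> X closure_of B"
      using nonempty by (intro exI[of _ A] exI[of _ "U - A"]) auto
  qed
  show ?thesis
    unfolding irresolvable_def top dense resolvable_iff by blast
qed

lemma openly_irresolvable_iff_interior_closure_subset:
  "openly_irresolvable X \<longleftrightarrow>
   (\<forall>A \<subseteq> topspace X. X interior_of (X closure_of A) \<subseteq> X closure_of (X interior_of A))"
proof (intro iffI allI impI subsetI)
  fix A x
  assume OI: "openly_irresolvable X" and x: "x \<in> X interior_of (X closure_of A)"
  have x_cl: "x \<in> X closure_of A"
    using x interior_of_subset[of X "X closure_of A"] by blast
  show "x \<in> X closure_of (X interior_of A)"
    unfolding in_closure_of
  proof (intro conjI allI impI)
    show "x \<in> topspace X"
      using x_cl closure_of_subset_topspace[of X A] by blast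
    fix T assume T: "x \<in> T \<and> openin X T"
    define V where "V = T \<inter> X interior_of (X closure_of A)"
    have V_open: "openin X V"
      using T by (simp add: V_def openin_Int)
    have V_ne: "V \<noteq> {}"
      using T x by (auto simp: V_def)
    have "V \<subseteq> X closure_of A"
      using interior_of_subset[of X "X closure_of A"] by (auto simp: V_def)
    then have "V \<subseteq> X closure_of (V \<inter> A)"
      using openin_Int_closure_of_subset[OF V_open, of A] by auto
    moreover have "irresolvable (subtopology X V)"
      using OI V_open V_ne by (simp add: openly_irresolvable_def)
    ultimately have "\<not> V \<subseteq> X closure_of (V - V \<inter> A)"
      using irresolvable_open_subtopology_iff[OF V_open V_ne] by auto
    moreover have "V - V \<inter> A = V - A" by auto
    ultimately have ne: "V - X closure_of (V - A) \<noteq> {}" by auto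
    have "V - X closure_of (V - A) \<subseteq> A"
      using closure_of_subset[of "V - A" X] openin_subset[OF V_open] by auto
    then have "V - X closure_of (V - A) \<subseteq> X interior_of A"
      using V_open by (intro interior_of_maximal) (auto intro: openin_diff)
    with ne show "\<exists>y. y \<in> X interior_of A \<and> y \<in> T"
      unfolding V_def by auto
  qed
next
  assume H: "\<forall>A \<subseteq> topspace X. X interior_of (X closure_of A) \<subseteq> X closure_of (X interior_of A)"
  show "openly_irresolvable X"
    unfolding openly_irresolvable_def
  proof (intro allI impI)
    fix U assume U: "openin X U \<and> U \<noteq> {}"
    then have U_open: "openin X U" and U_ne: "U \<noteq> {}" by auto
    show "irresolvable (subtopology X U)"
      unfolding irresolvable_open_subtopology_iff[OF U_open U_ne]
    proof (intro allI impI notI)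
      fix A assume A: "A \<subseteq> U" "U \<subseteq> X closure_of A" and coA: "U \<subseteq> X closure_of (U - A)"
      have "U \<subseteq> X interior_of (X closure_of A)"
        using U_open A(2) by (rule interior_of_maximal[rotated])
      also have "\<dots> \<subseteq> X closure_of (X interior_of A)"
        using H A(1) openin_subset[OF U_open] by auto
      finally have "U \<inter> X interior_of A \<noteq> {}"
        using U_ne openin_Int_closure_of_eq_empty[OF U_open, of "X interior_of A"] by auto
      then have "(U \<inter> X interior_of A) \<inter> X closure_of (U - A) \<noteq> {}"
        using coA by auto
      then have "(U \<inter> X interior_of A) \<inter> (U - A) \<noteq> {}"
        using openin_Int_closure_of_eq_empty[of X "U \<inter> X interior_of A" "U - A"] U_open
        by (auto simp: openin_Int)
      then show False
        using interior_of_subset[of X A] by blast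
    qed
  qed
qed

lemma in_closure_of_singleton: "x \<in> topspace X \<Longrightarrow> x \<in> X closure_of {x}"
  using closure_of_subset[of "{x}" X] by blast

lemma T_D_crowded_punctured_neighbourhood_nonempty:
  assumes TD: "T_D X" and cr: "crowded X" and W: "openin X W" and x: "x \<in> W"
  shows "W - X closure_of {x} \<noteq> {}"
proof
  assume empty: "W - X closure_of {x} = {}"
  have x_top: "x \<in> topspace X"
    using openin_subset[OF W] x by blast
  have "x \<notin> X derived_set_of {x}"
    unfolding in_derived_set_of using openin_topspace[of X] by blast
  then have "W - X derived_set_of {x} = {x}"
    using empty x by (auto simp: closure_of)
  moreover have "openin X (W - X derived_set_of {x})"
    using TD x_top W by (simp add: T_D_def openin_diff)
  ultimately show False
    using cr x_top by (simp add: crowded_def)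
qed

lemma T_D_crowded_in_derived_set_of:
  assumes TD: "T_D X" and cr: "crowded X" and U: "openin X U" and x: "x \<in> U"
    and punctured: "U - X closure_of {x} \<subseteq> X closure_of S"
  shows "x \<in> X derived_set_of S"
  unfolding in_derived_set_of
proof (intro conjI allI impI)
  show x_top: "x \<in> topspace X"
    using openin_subset[OF U] x by blast
  fix T assume T: "x \<in> T \<and> openin X T"
  define W where "W = T \<inter> U - X closure_of {x}"
  have W_open: "openin X W"
    using T U by (simp add: W_def openin_Int openin_diff)
  have "W \<noteq> {}"
    using T_D_crowded_punctured_neighbourhood_nonempty[OF TD cr, of "T \<inter> U" x] T U x
    by (simp add: W_def openin_Int)
  moreover have "W \<subseteq> X closure_of S"
    using punctured by (auto simp: W_def)
  ultimately have "W \<inter> S \<noteq> {}"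
    using openin_Int_closure_of_eq_empty[OF W_open, of S] by auto
  moreover have "x \<notin> W"
    using in_closure_of_singleton[OF x_top] by (auto simp: W_def)
  ultimately show "\<exists>y. y \<noteq> x \<and> y \<in> S \<and> y \<in> T"
    by (auto simp: W_def)
qed

lemma T_D_crowded_coderived_subset_derived_interior:
  assumes TD: "T_D X" and cr: "crowded X"
  shows "X coderived_set_of A \<subseteq> X derived_set_of (X interior_of A)"
proof
  fix x assume "x \<in> X coderived_set_of A"
  then obtain U where U: "openin X U" "x \<in> U" "U - {x} \<subseteq> A"
    unfolding in_coderived_set_of by blast
  have "x \<in> X closure_of {x}"
    using openin_subset[OF U(1)] U(2) by (auto intro: in_closure_of_singleton)
  then have "U - X closure_of {x} \<subseteq> A"
    using U(3) by auto
  then have "U - X closure_of {x} \<subseteq> X interior_of A"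
    using U(1) by (intro interior_of_maximal) (auto intro: openin_diff)
  then have "U - X closure_of {x} \<subseteq> X closure_of (X interior_of A)"
    using closure_of_subset[OF interior_of_subset_topspace[of X A]] by blast
  then show "x \<in> X derived_set_of (X interior_of A)"
    using T_D_crowded_in_derived_set_of[OF TD cr U(1,2)] by blast
qed

lemma M_d_valid_imp_crowded:
  assumes "M_d_valid X"
  shows "crowded X"
  unfolding crowded_def
proof (intro ballI notI)
  fix x assume x: "x \<in> topspace X" and isolated: "openin X {x}"
  have "x \<in> X coderived_set_of (X derived_set_of {})"
    unfolding in_coderived_set_of using isolated by blast
  then have "x \<in> X derived_set_of (X coderived_set_of {})"
    using assms[unfolded M_d_valid_iff, rule_format, of "{}"] by blast
  then show False
    using isolated by (auto simp: in_derived_set_of)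
qed

lemma M_d_valid_imp_openly_irresolvable:
  assumes TD: "T_D X" and valid: "M_d_valid X"
  shows "openly_irresolvable X"
  unfolding openly_irresolvable_iff_interior_closure_subset
proof (intro allI impI)
  fix A assume A: "A \<subseteq> topspace X"
  have cr: "crowded X"
    using valid by (rule M_d_valid_imp_crowded)
  let ?U = "X interior_of (X closure_of A)"
  have "?U \<subseteq> X derived_set_of A"
  proof
    fix x assume "x \<in> ?U"
    moreover have "?U - X closure_of {x} \<subseteq> X closure_of A"
      using interior_of_subset[of X "X closure_of A"] by blast
    ultimately show "x \<in> X derived_set_of A"
      using T_D_crowded_in_derived_set_of[OF TD cr openin_interior_of] by blast
  qed
  then have "?U \<subseteq> X interior_of (X derived_set_of A)"
    by (simp add: interior_of_maximal)
  also have "\<dots> \<subseteq> X coderived_set_of (X derived_set_of A)"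
    by (rule interior_of_subset_coderived_set_of)
  also have "\<dots> \<subseteq> X derived_set_of (X coderived_set_of A)"
    using valid A by (simp add: M_d_valid_iff)
  also have "\<dots> \<subseteq> X closure_of (X derived_set_of (X interior_of A))"
    using T_D_crowded_coderived_subset_derived_interior[OF TD cr, of A]
    by (meson closure_of_mono derived_set_of_mono derived_set_of_subset_closure_of order_trans)
  also have "\<dots> \<subseteq> X closure_of (X interior_of A)"
    by (metis closure_of_closure_of closure_of_mono derived_set_of_subset_closure_of)
  finally show "?U \<subseteq> X closure_of (X interior_of A)" .
qed

lemma openly_irresolvable_imp_M_d_valid:
  assumes TD: "T_D X" and cr: "crowded X" and OI: "openly_irresolvable X"
  shows "M_d_valid X"
  unfolding M_d_valid_iff
proof (intro allI impI subsetI)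
  fix A x assume A: "A \<subseteq> topspace X" and "x \<in> X coderived_set_of (X derived_set_of A)"
  then obtain U where U: "openin X U" "x \<in> U" "U - {x} \<subseteq> X derived_set_of A"
    unfolding in_coderived_set_of by blast
  have "x \<in> X closure_of {x}"
    using openin_subset[OF U(1)] U(2) by (auto intro: in_closure_of_singleton)
  then have "U - X closure_of {x} \<subseteq> X closure_of A"
    using U(3) derived_set_of_subset_closure_of[of X A] by auto
  then have "U - X closure_of {x} \<subseteq> X interior_of (X closure_of A)"
    using U(1) by (intro interior_of_maximal) (auto intro: openin_diff)
  also have "\<dots> \<subseteq> X closure_of (X interior_of A)"
    using OI A by (simp add: openly_irresolvable_iff_interior_closure_subset)
  finally have "x \<in> X derived_set_of (X interior_of A)"
    using T_D_crowded_in_derived_set_of[OF TD cr U(1,2)] by blast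
  then show "x \<in> X derived_set_of (X coderived_set_of A)"
    using derived_set_of_mono[OF interior_of_subset_coderived_set_of[of X A]] by blast
qed

theorem corollary1:
  fixes X :: "'a topology"
  assumes "T_D X"
  shows "(M_d_valid X \<longleftrightarrow> crowded X \<and> openly_irresolvable X) \<and>
         (crowded X \<longrightarrow>
            (M_d_valid X \<longleftrightarrow> openly_irresolvable X) \<and>
            (openly_irresolvable X \<longleftrightarrow> M_C_valid X))"
proof -
  have d_valid: "M_d_valid X \<longleftrightarrow> crowded X \<and> openly_irresolvable X"
    using M_d_valid_imp_crowded M_d_valid_imp_openly_irresolvable[OF assms]
      openly_irresolvable_imp_M_d_valid[OF assms] by blast
  have C_valid: "openly_irresolvable X \<longleftrightarrow> M_C_valid X"
    by (simp add: M_C_valid_iff openly_irresolvable_iff_interior_closure_subset)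
  show ?thesis
    using d_valid C_valid by blast
qed

end
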